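(* Let $(u,v),(u',v')\in\mathcal A$ and let $t,j,k\in\mathbb Z$ with $1\le t<k$, $u'\le u$ and $j\le -u$. Then (i) $d(k;u+j,v,u'+j,v')=d(k;u,v,u',v')$; (ii) $d(k;0,1,u',v')=d(k;0,v',u'-v'+1,1)$; (iii) $d(k;u,v,u',v')=d(k-t;u,v+t,u',v')$; (iv) if moreover $u'<0$, then $d(k;0,1,u',1)=\binom{-2u'-k}{-u'-k+1}\dfrac{k-1}{-u'}$.
   Context: Binomial coefficients $\binom{a}{b}$ with $a\ge0$ are $0$ when $b<0$ or $b>a$. Let $\mathcal A=\{(\ell,r)\in\mathbb Z^2:\ell\le 0,\ r\ge 1\}$. For $(u,v),(u',v')\in\mathcal A$ and $k\in\mathbb Z$, $\mathcal D(k;u,v,u',v')$ is the set of lattice paths from $(u,v)$ to $(u',v')$, all of whose points lie in $\mathcal A$, using only steps $\mathsf U=(0,1)$ and $\mathsf D=(-1,-1)$, which contain exactly $k$ lattice points (counting start and end) on the line $\{(\ell,1):\ell\le 0\}$; and $d(k;u,v,u',v')=|\mathcal D(k;u,v,u',v')|$. *)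

theory Defs
  imports Complex_Main
begin

definition inA :: "int \<times> int \<Rightarrow> bool" where
  "inA p \<longleftrightarrow> fst p \<le> 0 \<and> snd p \<ge> 1"

text \<open>Steps: True = U = (0,1), False = D = (-1,-1).\<close>
definition step :: "bool \<Rightarrow> int \<times> int \<Rightarrow> int \<times> int" where
  "step s p = (if s then (fst p, snd p + 1) else (fst p - 1, snd p - 1))"

fun pts :: "int \<times> int \<Rightarrow> bool list \<Rightarrow> (int \<times> int) list" where
  "pts p [] = [p]"
| "pts p (s # ss) = p # pts (step s p) ss"

definition Dpaths :: "int \<Rightarrow> int \<Rightarrow> int \<Rightarrow> int \<Rightarrow> int \<Rightarrow> bool list set" where
  "Dpaths k u v u' v' =
     {ss. last (pts (u, v) ss) = (u', v')
        \<and> (\<forall>q \<in> set (pts (u, v) ss). inA q)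
        \<and> int (length (filter (\<lambda>q. snd q = 1) (pts (u, v) ss))) = k}"

definition dcount :: "int \<Rightarrow> int \<Rightarrow> int \<Rightarrow> int \<Rightarrow> int \<Rightarrow> nat" where
  "dcount k u v u' v' = card (Dpaths k u v u' v')"

definition ibinom :: "int \<Rightarrow> int \<Rightarrow> nat" where
  "ibinom a b = (if 0 \<le> b \<and> b \<le> a then nat a choose nat b else 0)"

end

theory Submission
  imports Defs
begin

text \<open>Since the first coordinate never increases, a path starting at a point of \<open>\<A>\<close> stays
  in \<open>\<A>\<close> iff its height sequence stays \<open>\<ge> 1\<close>; so \<open>d\<close> only depends on the heights and on
  the number \<open>u - u'\<close> of down-steps, which gives (i), and reversing a path while exchanging
  U and D gives (ii). Splitting off the first step yields a recursion in the starting height,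
  along which raising the start by one costs exactly one visit to height 1 as long as at least
  two visits remain; iterating gives (iii). By (iii), \<open>d(k;0,1,u',1)\<close> counts the walks from
  height \<open>k\<close> that touch height 1 only at their end, and these satisfy the recursion of the
  ballot numbers \<open>C(2m-v,m-1) - C(2m-v,m)\<close>, whose absorption identity gives (iv).\<close>

fun heights :: "int \<Rightarrow> bool list \<Rightarrow> int list" where
  "heights v [] = [v]"
| "heights v (s # ss) = v # heights (if s then v + 1 else v - 1) ss"

lemma heights_not_Nil [simp]: "heights v ss \<noteq> []"
  by (cases ss) auto

lemma start_in_heights: "v \<in> set (heights v ss)"
  by (cases ss) auto

lemma last_heights: "last (heights v ss) = v + int (length ss) - 2 * int (length (filter Not ss))"
  by (induction ss arbitrary: v) auto

lemma heights_snoc: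
  "heights v (ss @ [s]) = heights v ss @ [if s then last (heights v ss) + 1 else last (heights v ss) - 1]"
  by (induction ss arbitrary: v) auto

lemma heights_reverse: "heights (last (heights v ss)) (rev (map Not ss)) = rev (heights v ss)"
  by (induction ss rule: rev_induct) (simp_all add: heights_snoc)

definition walks :: "int \<Rightarrow> int \<Rightarrow> int \<Rightarrow> int \<Rightarrow> bool list set" where
  "walks k m v w = {ss. int (length (filter Not ss)) = m \<and> last (heights v ss) = w
     \<and> (\<forall>x\<in>set (heights v ss). 1 \<le> x) \<and> int (length (filter (\<lambda>x. x = 1) (heights v ss))) = k}"

lemma length_walks: "ss \<in> walks k m v w \<Longrightarrow> int (length ss) = w - v + 2 * m"
  unfolding walks_def using last_heights[of v ss] by auto

lemma walks_too_short: "w - v + 2 * m < 0 \<Longrightarrow> walks k m v w = {}"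
  using length_walks by fastforce

lemma walks_below_one: "v < 1 \<Longrightarrow> walks k m v w = {}"
  unfolding walks_def using start_in_heights[of v] by force

lemma finite_walks: "finite (walks k m v w)"
proof (rule finite_subset)
  show "walks k m v w \<subseteq> {ss. length ss = nat (w - v + 2 * m)}"
    using length_walks by fastforce
  show "finite {ss :: bool list. length ss = nat (w - v + 2 * m)}"
    using finite_lists_length_eq[of "UNIV :: bool set"] by simp
qed

lemma pts_not_Nil [simp]: "pts p ss \<noteq> []"
  by (cases ss) auto

lemma map_snd_pts: "map snd (pts (u, v) ss) = heights v ss"
  by (induction ss arbitrary: u v) (auto simp: step_def)

lemma fst_pts_le: "q \<in> set (pts (u, v) ss) \<Longrightarrow> fst q \<le> u"
proof (induction ss arbitrary: u v)
  case (Cons s ss)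
  then show ?case
    by (cases s) (fastforce simp: step_def)+
qed simp

lemma fst_last_pts: "fst (last (pts (u, v) ss)) = u - int (length (filter Not ss))"
  by (induction ss arbitrary: u v) (auto simp: step_def)

lemma Dpaths_eq_walks:
  assumes "u \<le> 0"
  shows "Dpaths k u v u' v' = walks k (u - u') v v'"
proof (rule set_eqI)
  fix ss
  let ?P = "pts (u, v) ss"
  have "snd (last ?P) = last (heights v ss)"
    by (metis last_map map_snd_pts pts_not_Nil)
  then have endpoint: "last ?P = (u', v') \<longleftrightarrow> u - int (length (filter Not ss)) = u' \<and> last (heights v ss) = v'"
    using fst_last_pts[of u v ss] by (metis prod.collapse prod.inject)
  have "set (heights v ss) = snd ` set ?P"
    by (metis list.set_map map_snd_pts)
  then have "(\<forall>q\<in>set ?P. inA q) \<longleftrightarrow> (\<forall>x\<in>set (heights v ss). 1 \<le> x)"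
    using fst_pts_le[of _ u v ss] assms unfolding inA_def by fastforce
  moreover have "length (filter (\<lambda>q. snd q = 1) ?P) = length (filter (\<lambda>x. x = 1) (heights v ss))"
    unfolding map_snd_pts[of u v ss, symmetric] by (simp add: filter_map comp_def)
  ultimately show "ss \<in> Dpaths k u v u' v' \<longleftrightarrow> ss \<in> walks k (u - u') v v'"
    unfolding Dpaths_def walks_def using endpoint by auto
qed

lemma reverse_walk_in_walks:
  assumes "ss \<in> walks k m a b"
  shows "rev (map Not ss) \<in> walks k (b - a + m) b a"
proof -
  have "int (length (filter Not ss)) = m" and end_b: "last (heights a ss) = b"
    and "\<forall>x\<in>set (heights a ss). 1 \<le> x" and "int (length (filter (\<lambda>x. x = 1) (heights a ss))) = k"
    using assms unfolding walks_def by auto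
  moreover have "heights b (rev (map Not ss)) = rev (heights a ss)"
    using heights_reverse[of a ss] end_b by simp
  moreover have "length (filter Not (rev (map Not ss))) + length (filter Not ss) = length ss"
    using sum_length_filter_compl[of "\<lambda>x. x" ss] by (simp add: filter_map comp_def rev_filter[symmetric])
  moreover have "last (rev (heights a ss)) = a"
    by (cases ss) (auto simp: last_rev)
  ultimately show ?thesis
    using length_walks[OF assms] unfolding walks_def by (simp add: rev_filter[symmetric])
qed

lemma card_walks_reverse: "card (walks k m a b) = card (walks k (b - a + m) b a)"
proof -
  have "bij_betw (\<lambda>ss. rev (map Not ss)) (walks k m a b) (walks k (b - a + m) b a)"
  proof (rule bij_betw_byWitness[where f' = "\<lambda>ss. rev (map Not ss)"])
    show "(\<lambda>ss. rev (map Not ss)) ` walks k (b - a + m) b a \<subseteq> walks k m a b"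
      using reverse_walk_in_walks[of _ k "b - a + m" b a] by auto
    show "(\<lambda>ss. rev (map Not ss)) ` walks k m a b \<subseteq> walks k (b - a + m) b a"
      using reverse_walk_in_walks by auto
  qed (simp_all add: rev_map comp_def)
  then show ?thesis
    by (rule bij_betw_same_card)
qed

lemma walks_unfold:
  assumes "1 \<le> v"
  shows "walks k m v w = (if m = 0 \<and> v = w \<and> k = of_bool (v = 1) then {[]} else {})
     \<union> Cons True ` walks (k - of_bool (v = 1)) m (v + 1) w
     \<union> Cons False ` walks (k - of_bool (v = 1)) (m - 1) (v - 1) w"
proof (rule set_eqI)
  fix ss
  show "ss \<in> walks k m v w \<longleftrightarrow> ss \<in> (if m = 0 \<and> v = w \<and> k = of_bool (v = 1) then {[]} else {})
     \<union> Cons True ` walks (k - of_bool (v = 1)) m (v + 1) w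
     \<union> Cons False ` walks (k - of_bool (v = 1)) (m - 1) (v - 1) w"
    using assms by (cases ss; cases "hd ss") (auto simp: walks_def)
qed

lemma card_walks_unfold:
  assumes "1 \<le> v"
  shows "card (walks k m v w) = of_bool (m = 0 \<and> v = w \<and> k = of_bool (v = 1))
     + card (walks (k - of_bool (v = 1)) m (v + 1) w)
     + card (walks (k - of_bool (v = 1)) (m - 1) (v - 1) w)"
proof -
  let ?c = "of_bool (v = 1) :: int"
  let ?B = "if m = 0 \<and> v = w \<and> k = ?c then {[] :: bool list} else {}"
  let ?U = "Cons True ` walks (k - ?c) m (v + 1) w"
  let ?D = "Cons False ` walks (k - ?c) (m - 1) (v - 1) w"
  have fin: "finite ?B" "finite ?U" "finite ?D"
    by (simp_all add: finite_walks)
  have "card (walks k m v w) = card (?B \<union> ?U \<union> ?D)"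
    by (simp only: walks_unfold[OF assms])
  also have "\<dots> = card (?B \<union> ?U) + card ?D"
    by (rule card_Un_disjoint) (use fin in auto)
  also have "\<dots> = card ?B + card ?U + card ?D"
    by (subst card_Un_disjoint) (use fin in auto)
  also have "\<dots> = of_bool (m = 0 \<and> v = w \<and> k = ?c)
      + card (walks (k - ?c) m (v + 1) w) + card (walks (k - ?c) (m - 1) (v - 1) w)"
    by (simp add: card_image)
  finally show ?thesis .
qed

lemma card_walks_raise_start:
  assumes "1 \<le> v" and "2 \<le> k"
  shows "card (walks k m v w) = card (walks (k - 1) m (v + 1) w)"
  using assms(1)
proof (induction "nat (w - v + 2 * m)" arbitrary: v m rule: less_induct)
  case less
  show ?case
  proof (cases "v = 1")
    case True
    then show ?thesis
      using card_walks_unfold[of 1 k m w] assms(2) walks_below_one[of 0] by simp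
  next
    case False
    then have "2 \<le> v"
      using less.prems by simp
    then have "card (walks k m v w) = card (walks k m (v + 1) w) + card (walks k (m - 1) (v - 1) w)"
      using card_walks_unfold[of v k m w] assms(2) by simp
    also have "\<dots> = card (walks (k - 1) m (v + 2) w) + card (walks (k - 1) (m - 1) v w)"
    proof (cases "w - v + 2 * m \<le> 0")
      case True
      then show ?thesis
        by (simp add: walks_too_short)
    next
      case False
      then show ?thesis
        using less.hyps[of "v + 1" m] less.hyps[of "v - 1" "m - 1"] \<open>2 \<le> v\<close> by (simp add: add.assoc)
    qed
    also have "\<dots> = card (walks (k - 1) m (v + 1) w)"
      using card_walks_unfold[of "v + 1" "k - 1" m w] \<open>2 \<le> v\<close> assms(2) by (simp add: add.assoc)
    finally show ?thesis .
  qed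
qed

lemma card_walks_raise_start_by:
  assumes "1 \<le> v" and "0 \<le> t" and "t < k"
  shows "card (walks k m v w) = card (walks (k - t) m (v + t) w)"
  using assms(2,3)
proof (induction t rule: int_ge_induct)
  case (step t)
  then have "card (walks k m v w) = card (walks (k - t) m (v + t) w)"
    by simp
  also have "\<dots> = card (walks (k - t - 1) m (v + t + 1) w)"
    by (rule card_walks_raise_start) (use step assms(1) in auto)
  finally show ?case
    by (simp add: algebra_simps)
qed simp

lemma ibinom_symmetric: "ibinom a b = ibinom a (a - b)"
  unfolding ibinom_def using binomial_symmetric[of "nat b" "nat a"] by (auto simp: nat_diff_distrib)

lemma ibinom_pascal:
  assumes "0 < a"
  shows "ibinom a b = ibinom (a - 1) b + ibinom (a - 1) (b - 1)"
proof (cases "0 < b \<and> b \<le> a")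
  case True
  then have "nat a choose nat b = (nat (a - 1) choose nat (b - 1)) + (nat (a - 1) choose nat b)"
    using choose_reduce_nat[of "nat a" "nat b"] by (simp add: nat_diff_distrib)
  moreover have "nat (a - 1) choose nat b = 0" if "b = a"
    using that assms by simp
  ultimately show ?thesis
    using True unfolding ibinom_def by auto
qed (use assms in \<open>auto simp: ibinom_def\<close>)

lemma ibinom_absorption: "int (ibinom a b) * b = int (ibinom a (b - 1)) * (a - b + 1)"
proof (cases "0 < b \<and> b \<le> a + 1")
  case True
  define n i where "n = nat a" and "i = nat (b - 1)"
  have "(n choose Suc i) * Suc i = (n choose i) * (n - i)"
    by (metis binomial_absorb_comp binomial_absorption mult.commute)
  then have "int (n choose Suc i) * int (Suc i) = int (n choose i) * int (n - i)"
    by (metis of_nat_mult)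
  moreover have "int (Suc i) = b" "int (n - i) = a - b + 1" "nat b = Suc i"
    using True unfolding n_def i_def by auto
  moreover have "n choose Suc i = 0" if "b = a + 1"
    using that True unfolding n_def i_def by simp
  ultimately show ?thesis
    using True unfolding ibinom_def n_def[symmetric] i_def[symmetric] by auto
qed (auto simp: ibinom_def)

text \<open>The binomial formula fails only for the empty walk (\<open>v = 1\<close>, \<open>m = 0\<close>).\<close>
definition ballot :: "int \<Rightarrow> int \<Rightarrow> int" where
  "ballot m v = (if v = 1 then of_bool (m = 0)
     else int (ibinom (2 * m - v) (m - 1)) - int (ibinom (2 * m - v) m))"

lemma ballot_rec:
  assumes "2 \<le> v"
  shows "ballot m v = ballot m (v + 1) + ballot (m - 1) (v - 1)"
proof (cases "2 * m - v \<le> 0")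
  case True
  then show ?thesis
    using assms by (auto simp: ballot_def ibinom_def)
next
  case False
  define a where "a = 2 * m - v - 1"
  have pascal: "int (ibinom (a + 1) b) = int (ibinom a b) + int (ibinom a (b - 1))" for b
    using ibinom_pascal[of "a + 1" b] False unfolding a_def by simp
  show ?thesis
  proof (cases "v = 2")
    case True
    have "ibinom a (m - 2) = ibinom a (m - 1)"
      using ibinom_symmetric[of a "m - 2"] True unfolding a_def by (simp add: algebra_simps)
    then show ?thesis
      using True False pascal[of "m - 1"] pascal[of m] unfolding ballot_def a_def
      by (auto simp: algebra_simps ibinom_def)
  next
    case False
    then show ?thesis
      using assms pascal[of "m - 1"] pascal[of m] unfolding ballot_def a_def
      by (simp add: algebra_simps)
  qed
qed

lemma ballot_closed_form:
  assumes "2 \<le> v"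
  shows "ballot m v * m = int (ibinom (2 * m - v) (m - v + 1)) * (v - 1)"
proof -
  define a j where "a = 2 * m - v" and "j = m - v + 1"
  have "ballot m v = int (ibinom a j) - int (ibinom a (j - 1))"
    using assms ibinom_symmetric[of a "m - 1"] ibinom_symmetric[of a m]
    unfolding ballot_def a_def j_def by (simp add: algebra_simps)
  moreover have "int (ibinom a (j - 1)) * m = int (ibinom a j) * j"
    using ibinom_absorption[of a j] unfolding a_def j_def by (simp add: algebra_simps)
  ultimately have "ballot m v * m = int (ibinom a j) * (m - j)"
    by (simp add: left_diff_distrib right_diff_distrib mult.commute)
  then show ?thesis
    unfolding a_def j_def by simp
qed

lemma walks_zero_visits_to_one: "walks 0 m v 1 = {}"
proof -
  have "1 \<in> set (heights v ss)" if "last (heights v ss) = 1" for ss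
    using that by (metis heights_not_Nil last_in_set)
  then show ?thesis
    unfolding walks_def by (auto simp: filter_empty_conv)
qed

lemma card_walks_ballot:
  assumes "1 \<le> v"
  shows "int (card (walks 1 m v 1)) = ballot m v"
  using assms
proof (induction "nat (1 - v + 2 * m)" arbitrary: v m rule: less_induct)
  case less
  show ?case
  proof (cases "v = 1")
    case True
    then show ?thesis
      using card_walks_unfold[of 1 1 m 1] by (simp add: walks_zero_visits_to_one ballot_def)
  next
    case False
    then have "2 \<le> v"
      using less.prems by simp
    then have split: "card (walks 1 m v 1) = card (walks 1 m (v + 1) 1) + card (walks 1 (m - 1) (v - 1) 1)"
      using card_walks_unfold[of v 1 m 1] by simp
    show ?thesis
    proof (cases "1 - v + 2 * m \<le> 0")
      case True
      then show ?thesis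
        using \<open>2 \<le> v\<close> by (simp add: split walks_too_short ballot_def ibinom_def)
    next
      case False
      then show ?thesis
        using less.hyps[of "v + 1" m] less.hyps[of "v - 1" "m - 1"] \<open>2 \<le> v\<close> ballot_rec[of v m]
        by (simp add: split)
    qed
  qed
qed

theorem lemma5p2:
  fixes u v u' v' t j k :: int
  assumes "inA (u, v)" and "inA (u', v')"
    and "1 \<le> t" and "t < k" and "u' \<le> u" and "j \<le> - u"
  shows "dcount k (u + j) v (u' + j) v' = dcount k u v u' v'
    \<and> dcount k 0 1 u' v' = dcount k 0 v' (u' - v' + 1) 1
    \<and> dcount k u v u' v' = dcount (k - t) u (v + t) u' v'
    \<and> (u' < 0 \<longrightarrow>
         real (dcount k 0 1 u' 1) = real (ibinom (- 2 * u' - k) (- u' - k + 1)) * real_of_int (k - 1) / real_of_int (- u'))"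
proof -
  have "u \<le> 0" and "1 \<le> v"
    using assms(1) by (auto simp: inA_def)
  have dcount_walks: "dcount k' a b a' b' = card (walks k' (a - a') b b')" if "a \<le> 0" for k' a b a' b'
    using that by (simp add: dcount_def Dpaths_eq_walks)
  have "dcount k 0 1 u' 1 = card (walks 1 (- u') k 1)"
    using dcount_walks[of 0] card_walks_raise_start_by[of 1 "k - 1" k "- u'" 1] assms(3,4) by simp
  then have "int (dcount k 0 1 u' 1) * (- u') = int (ibinom (- 2 * u' - k) (- u' - k + 1)) * (k - 1)"
    using card_walks_ballot[of k "- u'"] ballot_closed_form[of k "- u'"] assms(3,4) by simp
  then have "real (dcount k 0 1 u' 1) * real_of_int (- u')
      = real (ibinom (- 2 * u' - k) (- u' - k + 1)) * real_of_int (k - 1)"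
    by (metis of_int_mult of_int_of_nat_eq)
  then have "u' < 0 \<longrightarrow>
      real (dcount k 0 1 u' 1) = real (ibinom (- 2 * u' - k) (- u' - k + 1)) * real_of_int (k - 1) / real_of_int (- u')"
    by (auto simp: field_simps)
  moreover have "dcount k 0 1 u' v' = dcount k 0 v' (u' - v' + 1) 1"
    using dcount_walks[of 0] card_walks_reverse[of k "- u'" 1 v'] by (simp add: algebra_simps)
  moreover have "dcount k (u + j) v (u' + j) v' = dcount k u v u' v'"
    using dcount_walks \<open>u \<le> 0\<close> assms(6) by simp
  moreover have "dcount k u v u' v' = dcount (k - t) u (v + t) u' v'"
    using dcount_walks[of u] \<open>u \<le> 0\<close> \<open>1 \<le> v\<close> assms(3,4) card_walks_raise_start_by[of v t k] by simp
  ultimately show ?thesis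
    by blast
qed

end
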